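(* Let $\Sigma$ be a finite alphabet, $S=s_0\cdots s_{m-1}\in\Sigma^m$, and $a,a'\in\Sigma^m$ with $\mathrm{rep}_{\mathrm{Sub}(S)}(a)=\mathrm{rep}_{\mathrm{Sub}(S)}(a')$. Then $f^S_{\mathrm{BMH}}(a)=f^S_{\mathrm{BMH}}(a')$ and $g^S_{\mathrm{BMH}}(a)=g^S_{\mathrm{BMH}}(a')$.
   Context: $\mathrm{Sub}(S)$ is the set of all substrings of $S$, including $\varepsilon$; $\mathrm{rep}_{\mathrm{Sub}(S)}(a)$ is the longest suffix of $a$ that is a substring of $S$. For a window $w=w_0\cdots w_{m-1}$: the Boyer–Moore–Horspool cost is $f^S_{\mathrm{BMH}}(w)=m$ if $w=S$ and otherwise $\min\{i\in\{1,\dots,m\}: w_{m-i}\ne s_{m-i}\}$. The BMH shift is $g^S_{\mathrm{BMH}}(w)=bc^S(w,1)$, where $bc^S(w,1)=m$ if $w_{m-1}\notin\{s_0,\dots,s_{m-2}\}$ and otherwise $\min\{k\in\{1,\dots,m-1\}: w_{m-1}=s_{m-1-k}\}$. *)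

theory Defs
  imports Main "HOL-Library.Sublist"
begin

definition Sub :: "'a list \<Rightarrow> 'a list set" where
  "Sub S = {x. sublist x S}"

definition rep_Sub :: "'a list \<Rightarrow> 'a list \<Rightarrow> 'a list" where
  "rep_Sub S a = drop (LEAST k. drop k a \<in> Sub S) a"

definition f_BMH :: "'a list \<Rightarrow> 'a list \<Rightarrow> nat" where
  "f_BMH S w = (let m = length S in
     if w = S then m
     else (LEAST i. 1 \<le> i \<and> i \<le> m \<and> w ! (m - i) \<noteq> S ! (m - i)))"

definition bc1 :: "'a list \<Rightarrow> 'a list \<Rightarrow> nat" where
  "bc1 S w = (let m = length S in
     if w ! (m - 1) \<notin> {S ! j | j. j < m - 1} then m
     else (LEAST k. 1 \<le> k \<and> k \<le> m - 1 \<and> w ! (m - 1) = S ! (m - 1 - k)))"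

definition g_BMH :: "'a list \<Rightarrow> 'a list \<Rightarrow> nat" where
  "g_BMH S w = bc1 S w"

end

theory Submission
  imports Defs
begin

text \<open>Write \<open>a = u v\<close> with \<open>v = rep(a)\<close>. Equal representatives force equal
  lengths of \<open>u\<close>, so either \<open>a = a'\<close>, or \<open>a\<close> and \<open>a'\<close> agree from some position
  \<open>j + 1\<close> on while neither suffix starting at \<open>j\<close> is a factor of \<open>S\<close>. The BMH cost is
  the length of the shortest suffix of the window that is not a suffix of \<open>S\<close>;
  such a suffix is found within the common part or, failing that, at position
  \<open>j\<close> in both windows. The BMH shift reads only the last letter, which is
  either common to both windows or, when \<open>j\<close> is the last position, a letter
  occurring nowhere in \<open>S\<close>.\<close>

lemma Least_eq_if_agree_below:
  fixes P Q :: "nat \<Rightarrow> bool"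
  assumes agree: "\<And>i. i < n \<Longrightarrow> P i \<longleftrightarrow> Q i" and "P n" "Q n"
  shows "(LEAST i. P i) = (LEAST i. Q i)"
proof -
  have le: "(LEAST i. P i) \<le> n" "(LEAST i. Q i) \<le> n"
    using \<open>P n\<close> \<open>Q n\<close> by (auto intro: Least_le)
  show ?thesis
  proof (rule antisym)
    show "(LEAST i. P i) \<le> (LEAST i. Q i)"
      using le agree LeastI[of Q, OF \<open>Q n\<close>] by (cases "(LEAST i. Q i) = n") (auto intro: Least_le)
    show "(LEAST i. Q i) \<le> (LEAST i. P i)"
      using le agree LeastI[of P, OF \<open>P n\<close>] by (cases "(LEAST i. P i) = n") (auto intro: Least_le)
  qed
qed

lemma drop_in_Sub: "drop j S \<in> Sub S"
  by (simp add: Sub_def)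

lemma singleton_in_Sub_iff: "[x] \<in> Sub S \<longleftrightarrow> x \<in> set S"
proof
  assume "[x] \<in> Sub S"
  then show "x \<in> set S" by (auto simp: Sub_def dest: set_mono_sublist)
next
  assume "x \<in> set S"
  then obtain ps ss where "S = ps @ x # ss" by (meson split_list)
  then show "[x] \<in> Sub S" by (auto simp: Sub_def sublist_def)
qed

lemma rep_Sub_eq_cases:
  assumes "length a = length a'" and "rep_Sub S a = rep_Sub S a'"
  shows "a = a' \<or> (\<exists>j. drop (Suc j) a = drop (Suc j) a' \<and> drop j a \<notin> Sub S \<and> drop j a' \<notin> Sub S)"
proof -
  define k where "k = (LEAST k. drop k a \<in> Sub S)"
  define k' where "k' = (LEAST k. drop k a' \<in> Sub S)"
  have "k \<le> length a" "k' \<le> length a'"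
    unfolding k_def k'_def by (auto intro: Least_le simp: Sub_def)
  moreover have drops: "drop k a = drop k' a'"
    using assms(2) by (simp add: rep_Sub_def k_def k'_def)
  ultimately have "k' = k"
    using assms(1) by (metis diff_diff_cancel length_drop)
  show ?thesis
  proof (cases k)
    case 0
    then show ?thesis using drops \<open>k' = k\<close> by simp
  next
    case (Suc j)
    have "drop j a \<notin> Sub S" "drop j a' \<notin> Sub S"
      using not_less_Least[of j "\<lambda>k. drop k a \<in> Sub S"] not_less_Least[of j "\<lambda>k. drop k a' \<in> Sub S"]
        Suc \<open>k' = k\<close> unfolding k_def k'_def by auto
    then show ?thesis using drops Suc \<open>k' = k\<close> by blast
  qed
qed

lemma f_BMH_eq_Least_drop:
  assumes "length w = length S" and "w \<noteq> S"
  shows "f_BMH S w = (LEAST i. drop (length S - i) w \<noteq> drop (length S - i) S)"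
proof -
  define m where "m = length S"
  define Q where "Q i \<longleftrightarrow> drop (m - i) w \<noteq> drop (m - i) S" for i
  define i0 where "i0 = (LEAST i. Q i)"
  have "Q m" using assms by (simp add: Q_def m_def)
  then have "Q i0" "i0 \<le> m" unfolding i0_def by (auto intro: LeastI Least_le)
  have "i0 \<noteq> 0" using \<open>Q i0\<close> assms(1) by (cases "i0 = 0") (auto simp: Q_def m_def)
  have "\<not> Q (i0 - 1)" using not_less_Least[of "i0 - 1" Q] \<open>i0 \<noteq> 0\<close> by (simp add: i0_def)
  then have "drop (Suc (m - i0)) w = drop (Suc (m - i0)) S"
    using \<open>i0 \<noteq> 0\<close> \<open>i0 \<le> m\<close> by (simp add: Q_def Suc_diff_le)
  with \<open>Q i0\<close> have mismatch: "w ! (m - i0) \<noteq> S ! (m - i0)"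
    using \<open>i0 \<noteq> 0\<close> \<open>i0 \<le> m\<close> assms(1)
    by (metis Q_def Cons_nth_drop_Suc diff_less m_def neq0_conv order_less_le_trans)
  have "(LEAST i. 1 \<le> i \<and> i \<le> m \<and> w ! (m - i) \<noteq> S ! (m - i)) = i0"
  proof (rule Least_equality)
    show "1 \<le> i0 \<and> i0 \<le> m \<and> w ! (m - i0) \<noteq> S ! (m - i0)"
      using \<open>i0 \<noteq> 0\<close> \<open>i0 \<le> m\<close> mismatch by simp
  next
    fix i assume i: "1 \<le> i \<and> i \<le> m \<and> w ! (m - i) \<noteq> S ! (m - i)"
    show "i0 \<le> i"
    proof (rule ccontr)
      assume "\<not> i0 \<le> i"
      then have "drop (m - i) w = drop (m - i) S"
        using not_less_Least[of i Q] by (simp add: i0_def Q_def)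
      then have "drop (m - i) w ! 0 = drop (m - i) S ! 0" by simp
      then show False using i assms(1) by (simp add: m_def)
    qed
  qed
  then show ?thesis
    using assms by (simp add: f_BMH_def Let_def i0_def Q_def m_def)
qed

lemma f_BMH_eq_if_drop_eq:
  assumes "length a = length S" "length a' = length S"
    and tail: "drop (Suc j) a = drop (Suc j) a'"
    and "drop j a \<noteq> drop j S" "drop j a' \<noteq> drop j S"
  shows "f_BMH S a = f_BMH S a'"
proof -
  define m where "m = length S"
  have "a \<noteq> S" "a' \<noteq> S" using assms(4,5) by auto
  have "j < m" using assms(1,4) by (rule_tac ccontr) (simp add: m_def)
  have "(LEAST i. drop (m - i) a \<noteq> drop (m - i) S) = (LEAST i. drop (m - i) a' \<noteq> drop (m - i) S)"
  proof (rule Least_eq_if_agree_below[where n = "m - j"])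
    fix i assume "i < m - j"
    then have "m - i = (m - i - Suc j) + Suc j" by arith
    then have "drop (m - i) a = drop (m - i - Suc j) (drop (Suc j) a)"
      "drop (m - i) a' = drop (m - i - Suc j) (drop (Suc j) a')" by (metis drop_drop)+
    then show "drop (m - i) a \<noteq> drop (m - i) S \<longleftrightarrow> drop (m - i) a' \<noteq> drop (m - i) S"
      using tail by simp
  qed (use assms \<open>j < m\<close> in simp_all)
  then show ?thesis
    by (simp add: f_BMH_eq_Least_drop[OF assms(1) \<open>a \<noteq> S\<close>]
        f_BMH_eq_Least_drop[OF assms(2) \<open>a' \<noteq> S\<close>] m_def)
qed

lemma bc1_eq_if_last_eq: "w ! (length S - 1) = w' ! (length S - 1) \<Longrightarrow> bc1 S w = bc1 S w'"
  by (auto simp: bc1_def Let_def)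

lemma bc1_eq_length_if_last_not_in_Sub:
  assumes "[w ! (length S - 1)] \<notin> Sub S"
  shows "bc1 S w = length S"
proof -
  have "w ! (length S - 1) \<notin> {S ! j | j. j < length S - 1}"
    using assms by (auto simp: singleton_in_Sub_iff)
  then show ?thesis by (simp add: bc1_def)
qed

lemma bc1_eq_if_drop_eq:
  assumes "length a = length S" "length a' = length S"
    and tail: "drop (Suc j) a = drop (Suc j) a'"
    and "drop j a \<notin> Sub S" "drop j a' \<notin> Sub S"
  shows "bc1 S a = bc1 S a'"
proof -
  define m where "m = length S"
  have "j < m" using assms(1,4) drop_all[of a j] by (fastforce simp: m_def Sub_def)
  show ?thesis
  proof (cases "Suc j < m")
    case True
    then have "Suc j + (m - 1 - Suc j) = m - 1" by arith
    moreover have "drop (Suc j) a ! (m - 1 - Suc j) = drop (Suc j) a' ! (m - 1 - Suc j)"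
      using tail by simp
    ultimately show ?thesis
      using True assms(1,2) by (intro bc1_eq_if_last_eq) (simp add: m_def)
  next
    case False
    then have "j = m - 1" "Suc j = m" using \<open>j < m\<close> by simp_all
    then have "drop j a = [a ! (m - 1)]" "drop j a' = [a' ! (m - 1)]"
      using \<open>j < m\<close> assms(1,2) by (metis Cons_nth_drop_Suc drop_all le_refl m_def)+
    then show ?thesis
      using assms(4,5) bc1_eq_length_if_last_not_in_Sub by (metis m_def)
  qed
qed

theorem lemma18:
  fixes \<Sigma> :: "'a set" and S a a' :: "'a list" and m :: nat
  assumes "finite \<Sigma>"
    and "S \<in> lists \<Sigma>" and "length S = m"
    and "a \<in> lists \<Sigma>" and "length a = m"
    and "a' \<in> lists \<Sigma>" and "length a' = m"
    and "rep_Sub S a = rep_Sub S a'"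
  shows "f_BMH S a = f_BMH S a' \<and> g_BMH S a = g_BMH S a'"
proof -
  have lengths: "length a = length S" "length a' = length S"
    using assms(3,5,7) by simp_all
  from rep_Sub_eq_cases[of a a' S] lengths assms(8)
  consider "a = a'"
    | j where "drop (Suc j) a = drop (Suc j) a'" "drop j a \<notin> Sub S" "drop j a' \<notin> Sub S"
    by auto
  then show ?thesis
  proof cases
    case 1
    then show ?thesis by simp
  next
    case 2
    then have "drop j a \<noteq> drop j S" "drop j a' \<noteq> drop j S"
      using drop_in_Sub by metis+
    then show ?thesis
      using 2 lengths f_BMH_eq_if_drop_eq bc1_eq_if_drop_eq unfolding g_BMH_def by metis
  qed
qed

end
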